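(* Let $d\geq 2$ and $0<a<b\leq d$ be integers, and let $\ell_d^{(a,b)}(\alpha,\lambda,n)$ be the number of partitions with perimeter $n$, largest part $\alpha$, exactly $\lambda$ parts, and all parts congruent to $a$ or $b$ modulo $d$. Then, as formal power series, $$\sum_{\alpha,\lambda,n\geq1}\ell_d^{(a,b)}(\alpha,\lambda,n)x^\alpha y^\lambda q^n=\frac{y\,(x^aq^a-x^ayq^{a+1}+x^bq^b)}{1-2yq+y^2q^2-x^dq^d},$$ and in particular $$\sum_{n\geq 1}\ell_d^{(a,b)}(n)q^n=\frac{q^a-q^{a+1}+q^b}{1-2q+q^2-q^d}.$$
   Context: A partition is a finite nonincreasing sequence of positive integers (its parts); its size is not fixed. The perimeter of a partition with largest part $\alpha$ and $\lambda$ parts is $\alpha+\lambda-1$. For $0<a<b\le d$, $\ell_d^{(a,b)}(n)$ is the number of partitions of perimeter $n$ all of whose parts are congruent to $a$ or $b$ modulo $d$. *)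

theory Defs
  imports "HOL-Computational_Algebra.Formal_Power_Series" "HOL-Number_Theory.Cong"
begin

definition is_partition :: "nat list \<Rightarrow> bool" where
  "is_partition p \<longleftrightarrow> p \<noteq> [] \<and> sorted_wrt (\<ge>) p \<and> (\<forall>k\<in>set p. 0 < k)"

definition largest_part :: "nat list \<Rightarrow> nat" where
  "largest_part p = hd p"

definition num_parts :: "nat list \<Rightarrow> nat" where
  "num_parts p = length p"

definition perimeter :: "nat list \<Rightarrow> nat" where
  "perimeter p = largest_part p + num_parts p - 1"

definition parts_ab_mod :: "nat \<Rightarrow> nat \<Rightarrow> nat \<Rightarrow> nat list \<Rightarrow> bool" where
  "parts_ab_mod d a b p \<longleftrightarrow> (\<forall>k\<in>set p. [k = a] (mod d) \<or> [k = b] (mod d))"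

definition ell3 :: "nat \<Rightarrow> nat \<Rightarrow> nat \<Rightarrow> nat \<Rightarrow> nat \<Rightarrow> nat \<Rightarrow> nat" where
  "ell3 d a b al la n = card {p. is_partition p \<and> parts_ab_mod d a b p \<and>
      largest_part p = al \<and> num_parts p = la \<and> perimeter p = n}"

definition ell :: "nat \<Rightarrow> nat \<Rightarrow> nat \<Rightarrow> nat \<Rightarrow> nat" where
  "ell d a b n = card {p. is_partition p \<and> parts_ab_mod d a b p \<and> perimeter p = n}"

text \<open>Trivariate formal power series in x, y, q: type real fps fps fps,
 outermost variable q, middle y, innermost x.\<close>
definition fq :: "real fps fps fps" where "fq = fps_X"
definition fy :: "real fps fps fps" where "fy = fps_const fps_X"
definition fx :: "real fps fps fps" where "fx = fps_const (fps_const fps_X)"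

definition trivar :: "(nat \<Rightarrow> nat \<Rightarrow> nat \<Rightarrow> real) \<Rightarrow> real fps fps fps" where
  "trivar c = Abs_fps (\<lambda>n. Abs_fps (\<lambda>la. Abs_fps (\<lambda>al.
      if 1 \<le> al \<and> 1 \<le> la \<and> 1 \<le> n then c al la n else 0)))"

end

(*
  A partition with largest part m and l parts has perimeter m + l - 1, and its other l - 1
  parts form an arbitrary multiset of admissible values at most m.  If c m admissible values
  are at most m, there are therefore (c m + l - 2 choose l - 1) such partitions.  Since
  c a = 1, c b = 2 and c (m + d) = c m + 2, a second difference in l and a shift by d in m
  annihilate these counts except at the three monomials of the numerator; in terms of series
  this says that the trivariate series times (1 - y q)^2 - x^d q^d is the numerator.  The
  univariate identity follows by setting x = y = 1, a ring homomorphism on the series whose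
  coefficient of q^n has degree at most n in x and in y.
*)
theory Submission
  imports Defs "HOL-Library.Multiset"
begin

unbundle fps_syntax

section \<open>Coefficient sums and the specialisation x = y = 1\<close>

lemma fps_mult_coeff_sum:
  fixes f g :: "'a::comm_semiring_1 fps"
  assumes f: "\<And>i. p < i \<Longrightarrow> f $ i = 0" and g: "\<And>j. r < j \<Longrightarrow> g $ j = 0"
  shows "(\<Sum>k\<le>p + r. (f * g) $ k) = (\<Sum>i\<le>p. f $ i) * (\<Sum>j\<le>r. g $ j)"
proof -
  have "(\<Sum>k\<le>p + r. (f * g) $ k) = (\<Sum>(i, j)\<in>{(i, j). i + j \<le> p + r}. f $ i * g $ j)"
    by (simp add: fps_mult_nth atLeast0AtMost sum.triangle_reindex_eq)
  also have "\<dots> = (\<Sum>(i, j)\<in>{..p} \<times> {..r}. f $ i * g $ j)"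
  proof (rule sum.mono_neutral_right)
    show "finite {(i, j). i + j \<le> p + r}"
      by (rule finite_subset[of _ "{..p + r} \<times> {..p + r}"]) auto
  qed (auto, metis f leI mult_zero_left, metis g leI mult_zero_right)
  also have "\<dots> = (\<Sum>i\<le>p. f $ i) * (\<Sum>j\<le>r. g $ j)"
    by (simp add: sum_product sum.cartesian_product)
  finally show ?thesis .
qed

lemma fps_fps_mult_coeff_sum:
  fixes A B :: "'a::comm_semiring_1 fps fps"
  assumes A: "\<And>l m. p < l \<or> p < m \<Longrightarrow> A $ l $ m = 0"
    and B: "\<And>l m. r < l \<or> r < m \<Longrightarrow> B $ l $ m = 0"
  shows "(\<Sum>l\<le>p + r. \<Sum>m\<le>p + r. (A * B) $ l $ m)
       = (\<Sum>l\<le>p. \<Sum>m\<le>p. A $ l $ m) * (\<Sum>l\<le>r. \<Sum>m\<le>r. B $ l $ m)"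
proof -
  define \<alpha> where "\<alpha> = Abs_fps (\<lambda>l. \<Sum>m\<le>p. A $ l $ m)"
  define \<beta> where "\<beta> = Abs_fps (\<lambda>l. \<Sum>m\<le>r. B $ l $ m)"
  have inner: "(\<Sum>m\<le>p + r. (A $ j * B $ k) $ m) = \<alpha> $ j * \<beta> $ k" for j k
    unfolding \<alpha>_def \<beta>_def
    by (simp, rule fps_mult_coeff_sum) (simp_all add: A B)
  have "(\<Sum>m\<le>p + r. (A * B) $ l $ m) = (\<alpha> * \<beta>) $ l" for l
  proof -
    have "(A * B) $ l $ m = (\<Sum>j = 0..l. (A $ j * B $ (l - j)) $ m)" for m
      by (subst fps_mult_nth) (simp only: fps_sum_nth)
    then have "(\<Sum>m\<le>p + r. (A * B) $ l $ m) = (\<Sum>j = 0..l. \<Sum>m\<le>p + r. (A $ j * B $ (l - j)) $ m)"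
      by (simp only: sum.swap[of _ "{..p + r}"])
    also have "\<dots> = (\<alpha> * \<beta>) $ l"
      unfolding inner by (simp only: fps_mult_nth)
    finally show ?thesis .
  qed
  then have "(\<Sum>l\<le>p + r. \<Sum>m\<le>p + r. (A * B) $ l $ m) = (\<Sum>l\<le>p + r. (\<alpha> * \<beta>) $ l)"
    by simp
  also have "\<dots> = (\<Sum>l\<le>p. \<alpha> $ l) * (\<Sum>l\<le>r. \<beta> $ l)"
    by (rule fps_mult_coeff_sum) (simp_all add: \<alpha>_def \<beta>_def A B)
  finally show ?thesis by (simp add: \<alpha>_def \<beta>_def)
qed

lemma fps_numeral_mult_nth [simp]: "(numeral k * f) $ n = numeral k * f $ n"
  by (simp add: fps_numeral_fps_const)

lemma inverse_one_fps_fps: "inverse (1 :: 'a::field fps fps) = 1"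
  by (rule fps_inverse_one') simp

lemma fps_fps_fps_mult_inverse:
  fixes D :: "'a::field fps fps fps"
  assumes "D $ 0 = 1"
  shows "D * inverse D = 1"
proof -
  have "inverse D = fps_right_inverse D (inverse (D $ 0))"
    by (fact fps_inverse_def)
  also have "inverse (D $ 0) = 1"
    using assms inverse_one_fps_fps by simp
  finally show ?thesis
    using fps_right_inverse[of D 1] assms by simp
qed

definition monom3 :: "nat \<Rightarrow> nat \<Rightarrow> nat \<Rightarrow> 'a::comm_ring_1 fps fps fps" where
  "monom3 i j k = fps_const (fps_const (fps_X ^ i) * fps_X ^ j) * fps_X ^ k"

lemma monom3_mult_nth:
  "(monom3 i j k * T) $ n $ l $ m =
     (if k \<le> n \<and> j \<le> l \<and> i \<le> m then T $ (n - k) $ (l - j) $ (m - i) else 0)"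
  by (simp add: monom3_def mult.assoc fps_X_power_mult_nth not_less)

lemma monom3_nth: "monom3 i j k $ n $ l $ m = (if n = k \<and> l = j \<and> m = i then 1 else 0)"
  using monom3_mult_nth[of i j k 1 n l m] by auto

lemma monom3_0_0_0: "monom3 0 0 0 = 1"
  by (simp add: monom3_def)

lemma monom3_mult: "monom3 i j k * monom3 i' j' k' = monom3 (i + i') (j + j') (k + k')"
  by (rule fps_ext)+ (auto simp: monom3_mult_nth monom3_nth)

lemma monom3_power: "monom3 i j k ^ e = monom3 (e * i) (e * j) (e * k)"
  by (induction e) (simp_all add: monom3_0_0_0 monom3_mult)

lemma fq_eq_monom3: "fq = monom3 0 0 1"
  and fy_eq_monom3: "fy = monom3 0 1 0"
  and fx_eq_monom3: "fx = monom3 1 0 0"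
  by (simp_all add: fq_def fy_def fx_def monom3_def)

definition xy_bounded :: "'a::zero fps fps fps \<Rightarrow> bool" where
  "xy_bounded T \<longleftrightarrow> (\<forall>n l m. n < l \<or> n < m \<longrightarrow> T $ n $ l $ m = 0)"

text \<open>The specialisation x = y = 1.  It is only multiplicative on xy_bounded series, whose
  coefficient of q^n is a polynomial of degree at most n in x and in y.\<close>

definition at_xy_one :: "'a::comm_monoid_add fps fps fps \<Rightarrow> 'a fps" where
  "at_xy_one T = Abs_fps (\<lambda>n. \<Sum>l\<le>n. \<Sum>m\<le>n. T $ n $ l $ m)"

lemma xy_bounded_monom3: "i \<le> k \<Longrightarrow> j \<le> k \<Longrightarrow> xy_bounded (monom3 i j k)"
  by (auto simp: xy_bounded_def monom3_nth)

lemma xy_bounded_add: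
  "xy_bounded S \<Longrightarrow> xy_bounded T \<Longrightarrow> xy_bounded (S + T :: 'a::monoid_add fps fps fps)"
  by (auto simp: xy_bounded_def)

lemma xy_bounded_diff:
  "xy_bounded S \<Longrightarrow> xy_bounded T \<Longrightarrow> xy_bounded (S - T :: 'a::ab_group_add fps fps fps)"
  by (auto simp: xy_bounded_def)

lemma xy_bounded_numeral_mult:
  "xy_bounded T \<Longrightarrow> xy_bounded (numeral k * T :: 'a::comm_semiring_1 fps fps fps)"
  by (simp add: xy_bounded_def)

lemma at_xy_one_add: "at_xy_one (S + T) = at_xy_one S + at_xy_one T"
  by (simp add: at_xy_one_def fps_eq_iff sum.distrib)

lemma at_xy_one_diff: "at_xy_one (S - T) = at_xy_one S - (at_xy_one T :: 'a::ab_group_add fps)"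
  by (simp add: at_xy_one_def fps_eq_iff sum_subtractf)

lemma at_xy_one_numeral_mult:
  "at_xy_one (numeral k * T) = numeral k * (at_xy_one T :: 'a::comm_semiring_1 fps)"
  by (simp add: at_xy_one_def fps_eq_iff sum_distrib_left)

lemma at_xy_one_monom3:
  assumes "i \<le> k" "j \<le> k"
  shows "at_xy_one (monom3 i j k) = fps_X ^ k"
proof (rule fps_ext)
  fix n
  have inner: "(\<Sum>m\<le>n. monom3 i j k $ n $ l $ m)
      = (if l = j then (if n = k \<and> i \<le> n then 1 else 0) else 0)" for l
  proof -
    have "(\<Sum>m\<le>n. monom3 i j k $ n $ l $ m)
        = (\<Sum>m\<le>n. if m = i then (if n = k \<and> l = j then 1 else 0) else 0)"
      by (rule sum.cong) (auto simp: monom3_nth)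
    also have "\<dots> = (if l = j then (if n = k \<and> i \<le> n then 1 else 0) else 0)"
      by simp
    finally show ?thesis .
  qed
  have "(\<Sum>l\<le>n. \<Sum>m\<le>n. monom3 i j k $ n $ l $ m) = (if n = k then 1 else 0)"
    using assms by (simp add: inner)
  then show "at_xy_one (monom3 i j k) $ n = fps_X ^ k $ n"
    by (simp add: at_xy_one_def fps_X_power_nth)
qed

lemma at_xy_one_mult:
  fixes S T :: "'a::comm_semiring_1 fps fps fps"
  assumes "xy_bounded S" "xy_bounded T"
  shows "at_xy_one (S * T) = at_xy_one S * at_xy_one T"
proof (rule fps_ext)
  fix n
  have factor: "(\<Sum>l\<le>n. \<Sum>m\<le>n. (S $ i * T $ (n - i)) $ l $ m)
      = at_xy_one S $ i * at_xy_one T $ (n - i)" if "i \<le> n" for i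
  proof -
    have "(\<Sum>l\<le>i + (n - i). \<Sum>m\<le>i + (n - i). (S $ i * T $ (n - i)) $ l $ m)
        = at_xy_one S $ i * at_xy_one T $ (n - i)"
      unfolding at_xy_one_def fps_nth_Abs_fps
      by (rule fps_fps_mult_coeff_sum) (use assms in \<open>auto simp: xy_bounded_def\<close>)
    then show ?thesis using that by simp
  qed
  have "(S * T) $ n $ l $ m = (\<Sum>i = 0..n. (S $ i * T $ (n - i)) $ l $ m)" for l m
    by (subst fps_mult_nth) (simp only: fps_sum_nth)
  then have "at_xy_one (S * T) $ n = (\<Sum>l\<le>n. \<Sum>m\<le>n. \<Sum>i = 0..n. (S $ i * T $ (n - i)) $ l $ m)"
    by (simp add: at_xy_one_def)
  also have "\<dots> = (\<Sum>i = 0..n. \<Sum>l\<le>n. \<Sum>m\<le>n. (S $ i * T $ (n - i)) $ l $ m)"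
    by (simp only: sum.swap[of _ "{0..n}"])
  also have "\<dots> = (\<Sum>i = 0..n. at_xy_one S $ i * at_xy_one T $ (n - i))"
    by (rule sum.cong) (simp_all add: factor)
  also have "\<dots> = (at_xy_one S * at_xy_one T) $ n"
    by (simp only: fps_mult_nth)
  finally show "at_xy_one (S * T) $ n = (at_xy_one S * at_xy_one T) $ n" .
qed

section \<open>Counting partitions by largest part and number of parts\<close>

lemma card_nonincreasing_lists:
  fixes A :: "'a::linorder set"
  assumes "finite A"
  shows "card {xs. sorted_wrt (\<ge>) xs \<and> length xs = k \<and> set xs \<subseteq> A} = (card A + k - 1) choose k"
proof -
  let ?L = "{xs. sorted_wrt (\<ge>) xs \<and> length xs = k \<and> set xs \<subseteq> A}"
  have "bij_betw mset ?L (multisets_of_size A k)"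
  proof (rule bij_betw_byWitness[where f' = "\<lambda>M. rev (sorted_list_of_multiset M)"])
    show "\<forall>xs\<in>?L. rev (sorted_list_of_multiset (mset xs)) = xs"
    proof
      fix xs assume "xs \<in> ?L"
      then have "sorted (rev xs)" by (simp add: sorted_wrt_rev)
      then have "sorted_list_of_multiset (mset xs) = rev xs"
        by (metis mset_rev sorted_list_of_multiset_mset sorted_sort_id)
      then show "rev (sorted_list_of_multiset (mset xs)) = xs" by simp
    qed
    show "\<forall>M\<in>multisets_of_size A k. mset (rev (sorted_list_of_multiset M)) = M"
      by simp
    show "mset ` ?L \<subseteq> multisets_of_size A k"
      by (auto simp: multisets_of_size_def)
    show "(\<lambda>M. rev (sorted_list_of_multiset M)) ` multisets_of_size A k \<subseteq> ?L"
      by (auto simp: multisets_of_size_def sorted_wrt_rev simp flip: size_mset)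
  qed
  then show ?thesis
    using card_multisets_of_size[OF assms] by (simp add: bij_betw_same_card)
qed

definition admissible :: "nat \<Rightarrow> nat \<Rightarrow> nat \<Rightarrow> nat set" where
  "admissible d a b = {k. 0 < k \<and> ([k = a] (mod d) \<or> [k = b] (mod d))}"

definition admissible_upto :: "nat \<Rightarrow> nat \<Rightarrow> nat \<Rightarrow> nat \<Rightarrow> nat set" where
  "admissible_upto d a b m = {k \<in> admissible d a b. k \<le> m}"

lemma finite_admissible_upto [simp]: "finite (admissible_upto d a b m)"
  by (simp add: admissible_upto_def)

lemma zero_not_admissible [simp]: "0 \<notin> admissible d a b"
  by (simp add: admissible_def)

definition mchoose :: "nat \<Rightarrow> nat \<Rightarrow> nat" where
  "mchoose c k = (c + k - 1) choose k"

lemma ell3_eq: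
  "ell3 d a b m l n =
     (if 0 < l \<and> n + 1 = m + l \<and> m \<in> admissible d a b
      then mchoose (card (admissible_upto d a b m)) (l - 1) else 0)"
proof -
  let ?P = "{p. is_partition p \<and> parts_ab_mod d a b p \<and>
      largest_part p = m \<and> num_parts p = l \<and> perimeter p = n}"
  let ?L = "{xs. sorted_wrt (\<ge>) xs \<and> length xs = l - 1 \<and> set xs \<subseteq> admissible_upto d a b m}"
  have "?P = (if 0 < l \<and> n + 1 = m + l \<and> m \<in> admissible d a b then (Cons m) ` ?L else {})"
    by (auto simp: is_partition_def parts_ab_mod_def largest_part_def num_parts_def perimeter_def
        admissible_upto_def admissible_def neq_Nil_conv image_iff)
  then show ?thesis
    by (simp add: ell3_def mchoose_def card_image card_nonincreasing_lists)
qed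

lemma ell_eq_sum_ell3: "ell d a b n = (\<Sum>l\<le>n. \<Sum>m\<le>n. ell3 d a b m l n)"
proof -
  let ?P = "\<lambda>l m. {p. is_partition p \<and> parts_ab_mod d a b p \<and>
      largest_part p = m \<and> num_parts p = l \<and> perimeter p = n}"
  have fin: "finite (?P l m)" for l m
  proof (rule finite_subset)
    show "?P l m \<subseteq> {xs. set xs \<subseteq> {..m} \<and> length xs = l}"
      by (auto simp: is_partition_def largest_part_def num_parts_def neq_Nil_conv)
  qed (simp add: finite_lists_length_eq)
  have "{p. is_partition p \<and> parts_ab_mod d a b p \<and> perimeter p = n} = (\<Union>l\<le>n. \<Union>m\<le>n. ?P l m)"
    by (auto simp: is_partition_def perimeter_def largest_part_def num_parts_def neq_Nil_conv)
  then have "ell d a b n = card (\<Union>l\<le>n. \<Union>m\<le>n. ?P l m)"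
    by (simp add: ell_def)
  also have "\<dots> = (\<Sum>l\<le>n. card (\<Union>m\<le>n. ?P l m))"
    by (rule card_UN_disjoint) (auto intro: fin)
  also have "\<dots> = (\<Sum>l\<le>n. \<Sum>m\<le>n. card (?P l m))"
    by (intro sum.cong refl card_UN_disjoint) (auto intro: fin)
  finally show ?thesis by (simp add: ell3_def)
qed

lemma mchoose_zero_left: "mchoose 0 k = (if k = 0 then 1 else 0)"
  by (simp add: mchoose_def)

text \<open>s c is the coefficient sequence of t / (1 - t)^c, and (1 - t)^2 cancels two factors.\<close>

lemma mchoose_second_difference:
  fixes s :: "nat \<Rightarrow> nat \<Rightarrow> real"
  defines "s c k \<equiv> if 0 < k then real (mchoose c (k - 1)) else 0"
  shows "s (c + 2) l - 2 * (if 1 \<le> l then s (c + 2) (l - 1) else 0)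
           + (if 2 \<le> l then s (c + 2) (l - 2) else 0) = s c l"
proof -
  consider "l = 0" | "l = 1" | "l = 2" | k where "l = k + 3"
    by atomize_elim presburger
  then show ?thesis
  proof cases
    case 4
    have "real ((c + k + 3) choose (k + 2))
        = real ((c + k + 1) choose k) + 2 * real ((c + k + 1) choose (k + 1))
          + real ((c + k + 1) choose (k + 2))"
      by (simp add: numeral_3_eq_3 numeral_2_eq_2)
    moreover have "real ((c + k + 2) choose (k + 1))
        = real ((c + k + 1) choose k) + real ((c + k + 1) choose (k + 1))"
      by (simp add: numeral_2_eq_2)
    ultimately show ?thesis
      using 4 by (simp add: s_def mchoose_def algebra_simps)
  qed (auto simp: s_def mchoose_def)
qed

section \<open>Parts congruent to a or b modulo d\<close>

locale two_residues =
  fixes d a b :: nat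
  assumes a_pos: "0 < a" and a_less_b: "a < b" and b_le_d: "b \<le> d"
begin

lemma admissible_le_d_iff: "k \<le> d \<Longrightarrow> k \<in> admissible d a b \<longleftrightarrow> k = a \<or> k = b"
  using a_pos a_less_b b_le_d
  by (cases "k = d") (auto simp: admissible_def cong_def le_less dest: dvd_imp_le)

lemma admissible_shift: "d < k \<Longrightarrow> k \<in> admissible d a b \<longleftrightarrow> k - d \<in> admissible d a b"
  using b_le_d a_less_b by (auto simp: admissible_def cong_def le_mod_geq)

lemma a_admissible: "a \<in> admissible d a b" and b_admissible: "b \<in> admissible d a b"
  using admissible_le_d_iff a_less_b b_le_d by auto

lemma admissible_upto_le_d: "m \<le> d \<Longrightarrow> admissible_upto d a b m = {k \<in> {a, b}. k \<le> m}"
  by (auto simp: admissible_upto_def admissible_le_d_iff)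

lemma card_admissible_upto_a: "card (admissible_upto d a b a) = 1"
proof -
  have "admissible_upto d a b a = {a}"
    using a_less_b b_le_d by (auto simp: admissible_upto_le_d)
  then show ?thesis by simp
qed

lemma card_admissible_upto_b: "card (admissible_upto d a b b) = 2"
proof -
  have "admissible_upto d a b b = {a, b}"
    using a_less_b b_le_d by (auto simp: admissible_upto_le_d)
  then show ?thesis using a_less_b by simp
qed

lemma card_admissible_upto_shift:
  assumes "d < m"
  shows "card (admissible_upto d a b m) = card (admissible_upto d a b (m - d)) + 2"
proof -
  have "admissible_upto d a b m = {a, b} \<union> (\<lambda>k. k + d) ` admissible_upto d a b (m - d)"
  proof (rule set_eqI)
    fix k
    show "k \<in> admissible_upto d a b m
        \<longleftrightarrow> k \<in> {a, b} \<union> (\<lambda>k. k + d) ` admissible_upto d a b (m - d)"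
    proof (cases "k \<le> d")
      case True
      then show ?thesis
        using assms a_less_b b_le_d admissible_le_d_iff[of k]
        by (auto simp: admissible_upto_def admissible_def)
    next
      case False
      then show ?thesis
        using assms a_less_b b_le_d admissible_shift[of k] admissible_shift[of "k - d"]
        by (auto simp: admissible_upto_def image_iff intro!: bexI[of _ "k - d"])
    qed
  qed
  moreover have "{a, b} \<inter> (\<lambda>k. k + d) ` admissible_upto d a b (m - d) = {}"
    using a_less_b b_le_d by (auto simp: admissible_upto_def admissible_def)
  ultimately show ?thesis
    using a_less_b by (simp add: card_Un_disjoint card_image)
qed

definition shape_count :: "nat \<Rightarrow> nat \<Rightarrow> real" where
  "shape_count m l = (if 0 < l \<and> m \<in> admissible d a b
     then real (mchoose (card (admissible_upto d a b m)) (l - 1)) else 0)"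

lemma shape_count_0_left [simp]: "shape_count 0 l = 0"
  and shape_count_0_right [simp]: "shape_count m 0 = 0"
  by (simp_all add: shape_count_def)

lemma ell3_eq_shape_count:
  "real (ell3 d a b m l n) = (if n + 1 = m + l then shape_count m l else 0)"
  by (simp add: ell3_eq shape_count_def)

lemma shape_count_rec:
  "shape_count m l - 2 * (if 1 \<le> l then shape_count m (l - 1) else 0)
     + (if 2 \<le> l then shape_count m (l - 2) else 0)
     - (if d \<le> m then shape_count (m - d) l else 0)
   = (if m = a \<and> l = 1 then 1 else 0) - (if m = a \<and> l = 2 then 1 else 0)
     + (if m = b \<and> l = 1 then 1 else 0)"
proof -
  have second_difference:
    "shape_count m l - 2 * (if 1 \<le> l then shape_count m (l - 1) else 0)
       + (if 2 \<le> l then shape_count m (l - 2) else 0)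
     = (if 0 < l then real (mchoose c (l - 1)) else 0)"
    if "m \<in> admissible d a b" "card (admissible_upto d a b m) = c + 2" for c
  proof -
    have sc: "shape_count m k = (if 0 < k then real (mchoose (c + 2) (k - 1)) else 0)" for k
      using that by (simp add: shape_count_def)
    show ?thesis
      unfolding sc by (rule mchoose_second_difference)
  qed
  consider "m \<notin> admissible d a b" | "m = a" | "m = b" | "m \<in> admissible d a b" "d < m"
    using admissible_le_d_iff[of m] by force
  then show ?thesis
  proof cases
    case 1
    then have "m \<noteq> a" "m \<noteq> b" "d \<le> m \<Longrightarrow> m - d \<notin> admissible d a b"
      using a_admissible b_admissible admissible_shift[of m] by (auto simp: le_less)
    then show ?thesis using 1 by (simp add: shape_count_def)
  next
    case 2
    have "shape_count a k = (if 0 < k then 1 else 0)" for k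
      using a_admissible card_admissible_upto_a by (simp add: shape_count_def mchoose_def)
    then show ?thesis
      using 2 a_less_b b_le_d by auto
  next
    case 3
    have "d \<le> m \<Longrightarrow> m - d = 0"
      using 3 b_le_d by simp
    then have "d \<le> m \<Longrightarrow> shape_count (m - d) l = 0"
      by (metis shape_count_0_left)
    then show ?thesis
      using 3 second_difference[of 0] b_admissible card_admissible_upto_b a_less_b
      by (auto simp: mchoose_zero_left)
  next
    case 4
    then have "m - d \<in> admissible d a b" "m \<noteq> a" "m \<noteq> b"
      using admissible_shift a_less_b b_le_d by auto
    then show ?thesis
      using 4 second_difference[of "card (admissible_upto d a b (m - d))"]
        card_admissible_upto_shift[of m]
      by (simp add: shape_count_def)
  qed
qed

abbreviation ell_series :: "real fps fps fps" where
  "ell_series \<equiv> trivar (\<lambda>al la n. real (ell3 d a b al la n))"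

abbreviation ell_denominator :: "real fps fps fps" where
  "ell_denominator \<equiv> 1 - 2 * monom3 0 1 1 + monom3 0 2 2 - monom3 d 0 d"

abbreviation ell_numerator :: "real fps fps fps" where
  "ell_numerator \<equiv> monom3 a 1 a - monom3 a 2 (a + 1) + monom3 b 1 b"

lemma ell_series_nth: "ell_series $ n $ l $ m = (if n + 1 = m + l then shape_count m l else 0)"
  by (cases "m = 0 \<or> l = 0") (auto simp: trivar_def ell3_eq_shape_count)

lemma xy_bounded_ell_series: "xy_bounded ell_series"
  unfolding xy_bounded_def
proof (intro allI impI)
  fix n l m :: nat
  assume "n < l \<or> n < m"
  then have "n + 1 \<noteq> m + l \<or> m = 0 \<or> l = 0" by arith
  then show "ell_series $ n $ l $ m = 0" by (auto simp: ell_series_nth)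
qed

lemma ell_series_mult_ell_denominator: "ell_series * ell_denominator = ell_numerator"
proof (intro fps_ext)
  fix n l m
  have "(ell_series * ell_denominator) $ n $ l $ m
      = ell_series $ n $ l $ m - 2 * (monom3 0 1 1 * ell_series) $ n $ l $ m
        + (monom3 0 2 2 * ell_series) $ n $ l $ m - (monom3 d 0 d * ell_series) $ n $ l $ m"
    by (simp add: ring_distribs mult.commute[of ell_series] mult.assoc)
  also have "\<dots> = (if n + 1 = m + l then
        shape_count m l - 2 * (if 1 \<le> l then shape_count m (l - 1) else 0)
        + (if 2 \<le> l then shape_count m (l - 2) else 0)
        - (if d \<le> m then shape_count (m - d) l else 0) else 0)"
    \<comment> \<open>on the diagonal n + 1 = m + l the guards on n only drop terms with m = 0 or l = 0\<close>
    using a_less_b b_le_d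
    by (auto simp: monom3_mult_nth ell_series_nth)
  also have "\<dots> = (if n = a \<and> l = 1 \<and> m = a then 1 else 0)
      - (if n = a + 1 \<and> l = 2 \<and> m = a then 1 else 0) + (if n = b \<and> l = 1 \<and> m = b then 1 else 0)"
    unfolding shape_count_rec by (cases "n + 1 = m + l") auto
  also have "\<dots> = ell_numerator $ n $ l $ m"
    by (simp add: monom3_nth)
  finally show "(ell_series * ell_denominator) $ n $ l $ m = ell_numerator $ n $ l $ m" .
qed

lemma ell_denominator_eq:
  "1 - 2 * fy * fq + fy ^ 2 * fq ^ 2 - fx ^ d * fq ^ d = ell_denominator"
  by (simp add: fx_eq_monom3 fy_eq_monom3 fq_eq_monom3 monom3_power monom3_mult mult.assoc
      numeral_2_eq_2)

lemma ell_numerator_eq: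
  "fy * (fx ^ a * fq ^ a - fx ^ a * fy * fq ^ (a + 1) + fx ^ b * fq ^ b) = ell_numerator"
  by (simp add: fx_eq_monom3 fy_eq_monom3 fq_eq_monom3 monom3_power monom3_mult ring_distribs
      numeral_2_eq_2)

lemma ell_denominator_nth_0: "ell_denominator $ 0 = 1"
  using a_less_b b_le_d by (intro fps_ext) (simp add: monom3_nth)

lemma ell_series_eq: "ell_series = ell_numerator * inverse ell_denominator"
proof -
  have "ell_series = ell_series * (ell_denominator * inverse ell_denominator)"
    using fps_fps_fps_mult_inverse[OF ell_denominator_nth_0] by simp
  then show ?thesis
    by (simp only: ell_series_mult_ell_denominator mult.assoc[symmetric])
qed

lemma xy_bounded_ell_denominator: "xy_bounded ell_denominator"
  using a_less_b b_le_d
  by (intro xy_bounded_add xy_bounded_diff xy_bounded_numeral_mult xy_bounded_monom3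
      xy_bounded_monom3[of 0 0 0, unfolded monom3_0_0_0]) auto

lemma at_xy_one_ell_denominator:
  "at_xy_one ell_denominator = 1 - 2 * fps_X + fps_X ^ 2 - fps_X ^ d"
  by (simp add: at_xy_one_add at_xy_one_diff at_xy_one_numeral_mult at_xy_one_monom3
      flip: monom3_0_0_0)

lemma at_xy_one_ell_numerator:
  "at_xy_one ell_numerator = fps_X ^ a - fps_X ^ (a + 1) + fps_X ^ b"
  using a_pos a_less_b by (simp add: at_xy_one_add at_xy_one_diff at_xy_one_monom3)

lemma at_xy_one_ell_series:
  "at_xy_one ell_series = Abs_fps (\<lambda>n. if 1 \<le> n then real (ell d a b n) else 0)"
  by (auto simp: fps_eq_iff at_xy_one_def trivar_def ell_eq_sum_ell3 ell3_eq
      intro!: sum.cong)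

lemma ell_univariate_eq:
  "Abs_fps (\<lambda>n. if 1 \<le> n then real (ell d a b n) else 0) =
     (fps_X ^ a - fps_X ^ (a + 1) + fps_X ^ b) / (1 - 2 * fps_X + fps_X ^ 2 - fps_X ^ d :: real fps)"
    (is "?F = ?N / ?D")
proof -
  have "at_xy_one ell_numerator = at_xy_one ell_series * at_xy_one ell_denominator"
    unfolding ell_series_mult_ell_denominator[symmetric]
    by (rule at_xy_one_mult[OF xy_bounded_ell_series xy_bounded_ell_denominator])
  then have FD: "?F * ?D = ?N"
    by (simp only: at_xy_one_ell_series at_xy_one_ell_denominator at_xy_one_ell_numerator)
  have D0: "?D $ 0 \<noteq> 0"
    using a_pos a_less_b b_le_d by simp
  have "?F = ?F * (?D * inverse ?D)"
    using inverse_mult_eq_1'[OF D0] by simp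
  also have "\<dots> = ?N / ?D"
    by (simp only: mult.assoc[symmetric] FD fps_divide_unit[OF D0])
  finally show ?thesis .
qed

end

theorem mainTheorem8:
  fixes d a b :: nat
  assumes "2 \<le> d" and "0 < a" and "a < b" and "b \<le> d"
  shows "trivar (\<lambda>al la n. real (ell3 d a b al la n)) =
           (fy * (fx ^ a * fq ^ a - fx ^ a * fy * fq ^ (a + 1) + fx ^ b * fq ^ b))
           * inverse (1 - 2 * fy * fq + fy ^ 2 * fq ^ 2 - fx ^ d * fq ^ d)
    \<and> Abs_fps (\<lambda>n. if 1 \<le> n then real (ell d a b n) else 0) =
           (fps_X ^ a - fps_X ^ (a + 1) + fps_X ^ b)
           / (1 - 2 * fps_X + fps_X ^ 2 - fps_X ^ d :: real fps)"
proof -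
  \<comment> \<open>2 \<le> d is implied by the other hypotheses\<close>
  interpret two_residues d a b
    using assms by unfold_locales
  show ?thesis
    unfolding ell_numerator_eq ell_denominator_eq using ell_series_eq ell_univariate_eq by blast
qed

end
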